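(* Let $F_1,\dots,F_n:\mathbb{R}^d\to\mathbb{R}^d$, $F=\frac1n\sum_iF_i$, and let $x^*$ satisfy $F(x^* )=0$. Assume $F$ is $L$-Lipschitz and satisfies the weak Minty condition with parameter $0<\rho<\frac1{2L}$. Let $v\sim\mathcal D$ and assume that for all $x\in\mathbb{R}^d$, $$\mathbb{E}\|F_v(x)\|^2\le\delta\|x-x^*\|^2+\|F(x)\|^2+2\sigma_*^2$$ for some $\delta,\sigma_*^2\ge0$. Let $\gamma_k=\gamma$, $\omega_k=\omega$ with $$\max\Big\{2\rho,\frac1{2L}\Big\}<\gamma<\frac1L,\qquad 0<\omega<\min\Big\{\gamma-2\rho,\frac1{4L}-\frac\gamma4\Big\},\qquad \delta\le\frac{(1-L\gamma)L^3\omega}{32}.$$ Then for all $K\ge2$ the iterates of SPEG satisfy $$\min_{0\le k\le K-1}\mathbb{E}\|F(\hat x_k)\|^2\le\frac{(1+8\omega\gamma(\delta+L^2)-L\gamma)\big(1+\frac{48\omega\gamma\delta}{(1-L\gamma)^2}\big)^{K-1}\|x_0-x^*\|^2}{\omega\gamma(1-L(\gamma+4\omega))(K-1)}+\frac{8\Big(8+\frac{(1-L\gamma)^2}{K-1}\big(1+\frac{48\omega\gamma\delta}{(1-L\gamma)^2}\big)^{K-1}\Big)\sigma_*^2}{(1-L\gamma)^2(1-L(\gamma+4\omega))}.$$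
   Context: $L$-Lipschitz: $\|F(x)-F(y)\|\le L\|x-y\|$. Weak Minty condition with parameter $\rho>0$: $\langle F(x),x-x^*\rangle\ge-\rho\|F(x)\|^2$ for all $x$. A sampling distribution $\mathcal D$ is a distribution of a random $v\in\mathbb{R}^n_+$ with $\mathbb{E}[v_i]=1$ for all $i$; $F_v(x):=\frac1n\sum_iv_iF_i(x)$. SPEG: given $x_0$, $\hat x_{-1}=x_0$, and for $k\ge0$: $\hat x_k=x_k-\gamma_kF_{v_{k-1}}(\hat x_{k-1})$, $x_{k+1}=x_k-\omega_kF_{v_k}(\hat x_k)$, with $v_{-1},v_0,v_1,\dots$ i.i.d. samples from $\mathcal D$. *)

theory Defs
  imports "HOL-Analysis.Analysis" "HOL-Probability.Probability"
begin

text \<open>Operators indexed by a finite type 'n (so n = CARD('n)); sampling vectors v :: real^'n.\<close>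

definition Favg :: "('n::finite \<Rightarrow> 'a::real_normed_vector \<Rightarrow> 'a) \<Rightarrow> 'a \<Rightarrow> 'a" where
  "Favg Fs x = (1 / real CARD('n)) *\<^sub>R (\<Sum>i\<in>UNIV. Fs i x)"

definition Fv :: "('n::finite \<Rightarrow> 'a::real_normed_vector \<Rightarrow> 'a) \<Rightarrow> real^'n \<Rightarrow> 'a \<Rightarrow> 'a" where
  "Fv Fs v x = (1 / real CARD('n)) *\<^sub>R (\<Sum>i\<in>UNIV. (v $ i) *\<^sub>R Fs i x)"

text \<open>SPEG iterates. The sample sequence vs is shifted: vs 0 = v_{-1}, vs (k+1) = v_k.
  speg Fs \<gamma> \<omega> x0 vs k = (x_k, xhat_k), with xhat_{-1} = x_0.\<close>

fun speg :: "('n::finite \<Rightarrow> 'a::real_normed_vector \<Rightarrow> 'a) \<Rightarrow> real \<Rightarrow> real \<Rightarrow> 'a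
              \<Rightarrow> (nat \<Rightarrow> real^'n) \<Rightarrow> nat \<Rightarrow> 'a \<times> 'a" where
  "speg Fs \<gamma> \<omega> x0 vs 0 = (x0, x0 - \<gamma> *\<^sub>R Fv Fs (vs 0) x0)"
| "speg Fs \<gamma> \<omega> x0 vs (Suc k) =
     (let (x, xh) = speg Fs \<gamma> \<omega> x0 vs k;
          x' = x - \<omega> *\<^sub>R Fv Fs (vs (Suc k)) xh
      in (x', x' - \<gamma> *\<^sub>R Fv Fs (vs (Suc k)) xh))"

definition speg_x :: "('n::finite \<Rightarrow> 'a::real_normed_vector \<Rightarrow> 'a) \<Rightarrow> real \<Rightarrow> real \<Rightarrow> 'a
              \<Rightarrow> (nat \<Rightarrow> real^'n) \<Rightarrow> nat \<Rightarrow> 'a" where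
  "speg_x Fs \<gamma> \<omega> x0 vs k = fst (speg Fs \<gamma> \<omega> x0 vs k)"

definition speg_xhat :: "('n::finite \<Rightarrow> 'a::real_normed_vector \<Rightarrow> 'a) \<Rightarrow> real \<Rightarrow> real \<Rightarrow> 'a
              \<Rightarrow> (nat \<Rightarrow> real^'n) \<Rightarrow> nat \<Rightarrow> 'a" where
  "speg_xhat Fs \<gamma> \<omega> x0 vs k = snd (speg Fs \<gamma> \<omega> x0 vs k)"

end

theory Submission
  imports Defs
begin

text \<open>The iteration is tracked through the state (x, g), where g is the last sampled operator value,
  so that the extrapolated point is x - \<gamma> g. The potential
  \<Phi>(x, g) = \<parallel>x - x*\<parallel>^2 + A \<parallel>F(x - \<gamma> g) - g\<parallel>^2
  satisfies a drift inequality E \<Phi>(next state) + c \<parallel>g\<parallel>^2 \<le> a \<Phi> + b: the weak Minty condition and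
  polarization control \<langle>x - x*, F(x - \<gamma> g)\<rangle>, Lipschitz continuity makes the residual F(x - \<gamma> g) - g
  contract by the factor L\<gamma> up to the new stochastic error, and the variance bound controls the noise.
  Since g is an unbiased sample of F at the previous extrapolated point, averaging the drift
  inequality once more replaces c \<parallel>g\<parallel>^2 by c \<parallel>F(x - \<gamma> g)\<parallel>^2. Summing the inequalities with
  discount a^(-k) along the sample stream bounds a weighted average, hence the minimum, of the
  expected squared residuals. When a^(K-1) / (K - 1) > 1 the claimed bound is instead implied by a direct
  estimate of the first residual.\<close>

lemma norm_add_sq_le_weighted:
  fixes u w :: "'a::real_normed_vector"
  assumes "e > 0"
  shows "(norm (u + w))\<^sup>2 \<le> (1 + e) * (norm u)\<^sup>2 + (1 + 1 / e) * (norm w)\<^sup>2"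
proof -
  have "(norm (u + w))\<^sup>2 \<le> (norm u + norm w)\<^sup>2"
    by (simp add: norm_triangle_ineq power_mono)
  also have "\<dots> = (1 + e) * (norm u)\<^sup>2 + (1 + 1 / e) * (norm w)\<^sup>2 - (e * norm u - norm w)\<^sup>2 / e"
    using assms by (simp add: field_simps power2_eq_square)
  also have "\<dots> \<le> (1 + e) * (norm u)\<^sup>2 + (1 + 1 / e) * (norm w)\<^sup>2"
    using assms by simp
  finally show ?thesis .
qed

lemma power2_convex_le:
  fixes a b q :: real
  assumes "0 < q" "q < 1"
  shows "(q * a + b)\<^sup>2 \<le> q * a\<^sup>2 + b\<^sup>2 / (1 - q)"
proof -
  have "1 + (1 - q) / q = 1 / q" "1 + 1 / ((1 - q) / q) = 1 / (1 - q)"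
    using assms by (simp_all add: field_simps)
  then have "(q * a + b)\<^sup>2 \<le> 1 / q * (q * a)\<^sup>2 + 1 / (1 - q) * b\<^sup>2"
    using norm_add_sq_le_weighted[of "(1 - q) / q" "q * a" b] assms by simp
  also have "1 / q * (q * a)\<^sup>2 = q * a\<^sup>2"
    using assms by (simp add: power2_eq_square)
  finally show ?thesis by simp
qed

lemma lipschitz_extrapolation_residual_le:
  fixes F :: "'a::real_normed_vector \<Rightarrow> 'a"
  assumes lip: "\<And>x y. norm (F x - F y) \<le> L * norm (x - y)"
    and "L > 0" "\<gamma> > 0" "\<omega> > 0" "L * \<gamma> < 1" "L * \<gamma> + L * \<omega> \<le> 1"
  shows "(norm (F (x - \<omega> *\<^sub>R g' - \<gamma> *\<^sub>R g') - g'))\<^sup>2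
    \<le> L * \<gamma> * (norm (F (x - \<gamma> *\<^sub>R g) - g))\<^sup>2
      + (2 * (L * \<omega>)\<^sup>2 * (norm (F (x - \<gamma> *\<^sub>R g)))\<^sup>2 + 8 * (norm (g' - F (x - \<gamma> *\<^sub>R g)))\<^sup>2)
        / (1 - L * \<gamma>)"
proof -
  define f where "f = F (x - \<gamma> *\<^sub>R g)"
  define h where "h = f - g"
  define \<xi> where "\<xi> = g' - f"
  have moved: "(x - \<gamma> *\<^sub>R g) - (x - \<omega> *\<^sub>R g' - \<gamma> *\<^sub>R g')
      = \<omega> *\<^sub>R f + (\<omega> + \<gamma>) *\<^sub>R \<xi> + \<gamma> *\<^sub>R h"
    unfolding h_def \<xi>_def by (simp add: algebra_simps)
  have "norm (F (x - \<omega> *\<^sub>R g' - \<gamma> *\<^sub>R g') - g')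
      \<le> norm (f - F (x - \<omega> *\<^sub>R g' - \<gamma> *\<^sub>R g')) + norm \<xi>"
    unfolding \<xi>_def by (metis norm_minus_commute norm_triangle_ineq4 diff_diff_eq2 diff_add_cancel)
  also have "\<dots> \<le> L * norm (\<omega> *\<^sub>R f + (\<omega> + \<gamma>) *\<^sub>R \<xi> + \<gamma> *\<^sub>R h) + norm \<xi>"
    using lip[of "x - \<gamma> *\<^sub>R g" "x - \<omega> *\<^sub>R g' - \<gamma> *\<^sub>R g'"] unfolding moved f_def by simp
  also have "\<dots> \<le> L * (\<omega> * norm f + (\<omega> + \<gamma>) * norm \<xi> + \<gamma> * norm h) + norm \<xi>"
    using assms by (intro add_right_mono mult_left_mono norm_triangle_le add_mono) auto
  also have "\<dots> = L * \<gamma> * norm h + L * \<omega> * norm f + (1 + L * \<gamma> + L * \<omega>) * norm \<xi>"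
    by (simp add: algebra_simps)
  also have "\<dots> \<le> L * \<gamma> * norm h + (L * \<omega> * norm f + 2 * norm \<xi>)"
    using mult_right_mono[of "1 + L * \<gamma> + L * \<omega>" 2 "norm \<xi>"] assms by simp
  finally have "norm (F (x - \<omega> *\<^sub>R g' - \<gamma> *\<^sub>R g') - g') \<le> L * \<gamma> * norm h + (L * \<omega> * norm f + 2 * norm \<xi>)" .
  then have "(norm (F (x - \<omega> *\<^sub>R g' - \<gamma> *\<^sub>R g') - g'))\<^sup>2 \<le> (L * \<gamma> * norm h + (L * \<omega> * norm f + 2 * norm \<xi>))\<^sup>2"
    by (simp add: power_mono)
  also have "\<dots> \<le> L * \<gamma> * (norm h)\<^sup>2 + (L * \<omega> * norm f + 2 * norm \<xi>)\<^sup>2 / (1 - L * \<gamma>)"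
    using assms by (intro power2_convex_le) auto
  also have "(L * \<omega> * norm f + 2 * norm \<xi>)\<^sup>2 \<le> 2 * (L * \<omega>)\<^sup>2 * (norm f)\<^sup>2 + 8 * (norm \<xi>)\<^sup>2"
    using norm_add_sq_le_weighted[of 1 "L * \<omega> * norm f" "2 * norm \<xi>"]
    by (simp add: power_mult_distrib)
  finally show ?thesis
    using assms unfolding h_def f_def \<xi>_def by (simp add: divide_right_mono)
qed

lemma power2_norm_add_scaleR:
  fixes z w :: "'a::real_inner"
  shows "(norm (z + a *\<^sub>R w))\<^sup>2 = (norm z)\<^sup>2 + 2 * a * inner z w + a\<^sup>2 * (norm w)\<^sup>2"
proof -
  have "(norm (z + a *\<^sub>R w))\<^sup>2 = inner (z + a *\<^sub>R w) (z + a *\<^sub>R w)"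
    by (simp only: power2_norm_eq_inner)
  also have "\<dots> = inner z z + 2 * a * inner z w + a\<^sup>2 * inner w w"
    by (simp add: inner_commute power2_eq_square algebra_simps)
  finally show ?thesis by (simp only: dot_square_norm)
qed

lemma geometric_sum_ge:
  fixes r :: real
  assumes "0 < r" "r \<le> 1"
  shows "real n * r ^ n \<le> (\<Sum>k<n. r ^ Suc k)"
proof -
  have "real n * r ^ n = (\<Sum>k<n. r ^ n)" by simp
  also have "\<dots> \<le> (\<Sum>k<n. r ^ Suc k)"
    using assms by (intro sum_mono power_decreasing) auto
  finally show ?thesis .
qed

lemma Min_le_weighted_average:
  fixes m :: "'i \<Rightarrow> ennreal" and w :: "'i \<Rightarrow> real"
  assumes "finite I" "I \<noteq> {}" "\<And>i. i \<in> I \<Longrightarrow> 0 \<le> w i" "0 < (\<Sum>i\<in>I. w i)"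
    and bound: "(\<Sum>i\<in>I. ennreal (w i) * m i) \<le> ennreal Z"
  shows "Min (m ` I) \<le> ennreal (Z / (\<Sum>i\<in>I. w i))"
proof -
  define W where "W = (\<Sum>i\<in>I. w i)"
  have "ennreal W = (\<Sum>i\<in>I. ennreal (w i))"
    unfolding W_def using assms(3) by simp
  then have "ennreal W * Min (m ` I) = (\<Sum>i\<in>I. ennreal (w i) * Min (m ` I))"
    by (simp add: sum_distrib_right)
  also have "\<dots> \<le> (\<Sum>i\<in>I. ennreal (w i) * m i)"
    using assms(1) by (intro sum_mono mult_left_mono Min_le) auto
  also have "\<dots> \<le> ennreal Z" by (fact bound)
  finally have "ennreal W * Min (m ` I) \<le> ennreal Z" .
  then have "ennreal (1 / W) * (ennreal W * Min (m ` I)) \<le> ennreal (1 / W) * ennreal Z"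
    by (rule mult_left_mono) simp
  moreover have "W > 0" unfolding W_def using assms(4) .
  ultimately show ?thesis
    unfolding W_def[symmetric]
    by (simp add: ennreal_mult'[symmetric] mult.assoc[symmetric] flip: ennreal_mult)
qed

lemma nn_integral_le_integral_bound:
  assumes "integrable M b" "\<And>x. x \<in> space M \<Longrightarrow> f x \<le> b x" "\<And>x. x \<in> space M \<Longrightarrow> 0 \<le> b x"
  shows "(\<integral>\<^sup>+x. ennreal (f x) \<partial>M) \<le> ennreal (\<integral>x. b x \<partial>M)"
proof -
  have "(\<integral>\<^sup>+x. ennreal (f x) \<partial>M) \<le> (\<integral>\<^sup>+x. ennreal (b x) \<partial>M)"
    using assms(2) by (intro nn_integral_mono ennreal_leI)
  also have "\<dots> = ennreal (\<integral>x. b x \<partial>M)"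
    using assms(1,3) by (intro nn_integral_eq_integral) auto
  finally show ?thesis .
qed

section \<open>Discounted drift along a random trajectory\<close>

primrec trajectory :: "('s \<Rightarrow> 'v \<Rightarrow> 's) \<Rightarrow> 's \<Rightarrow> nat \<Rightarrow> 'v stream \<Rightarrow> 's" where
  "trajectory T \<sigma> 0 s = \<sigma>"
| "trajectory T \<sigma> (Suc k) s = T (trajectory T \<sigma> k s) (s !! k)"

lemma trajectory_Suc_Stream: "trajectory T \<sigma> (Suc k) (v ## s) = trajectory T (T \<sigma> v) k s"
  by (induction k) auto

lemma measurable_trajectory:
  assumes T: "case_prod T \<in> measurable (S \<Otimes>\<^sub>M M) S"
    and \<sigma>: "\<sigma> \<in> measurable N S" and s: "s \<in> measurable N (stream_space M)"
  shows "(\<lambda>w. trajectory T (\<sigma> w) k (s w)) \<in> measurable N S"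
proof (induction k)
  case 0
  then show ?case using \<sigma> by simp
next
  case (Suc k)
  have "(\<lambda>w. s w !! k) \<in> measurable N M"
    using measurable_compose[OF s measurable_snth] .
  with Suc have "(\<lambda>w. (trajectory T (\<sigma> w) k (s w), s w !! k)) \<in> measurable N (S \<Otimes>\<^sub>M M)"
    by measurable
  from measurable_compose[OF this T] show ?case by simp
qed

definition discounted_sum ::
    "('s \<Rightarrow> 'v \<Rightarrow> 's) \<Rightarrow> ('s \<Rightarrow> ennreal) \<Rightarrow> ('s \<Rightarrow> ennreal) \<Rightarrow> real \<Rightarrow> real \<Rightarrow> nat \<Rightarrow> 's \<Rightarrow> 'v stream \<Rightarrow> ennreal"
  where "discounted_sum T G \<Phi> r c n \<sigma> s =
    (\<Sum>k<n. ennreal (r ^ Suc k * c) * G (trajectory T \<sigma> k s)) + ennreal (r ^ n) * \<Phi> (trajectory T \<sigma> n s)"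

lemma discounted_sum_Suc_Stream:
  assumes "r \<ge> 0" "c \<ge> 0"
  shows "discounted_sum T G \<Phi> r c (Suc n) \<sigma> (v ## s)
    = ennreal (r * c) * G \<sigma> + ennreal r * discounted_sum T G \<Phi> r c n (T \<sigma> v) s"
proof -
  have "ennreal (r ^ Suc (Suc k) * c) = ennreal r * ennreal (r ^ Suc k * c)" for k
    using assms by (simp add: ennreal_mult'[symmetric] mult_ac)
  moreover have "ennreal (r ^ Suc n) = ennreal r * ennreal (r ^ n)"
    using assms by (simp add: ennreal_mult'[symmetric])
  ultimately have "discounted_sum T G \<Phi> r c (Suc n) \<sigma> (v ## s) = ennreal (r * c) * G \<sigma>
      + (\<Sum>k<n. ennreal r * (ennreal (r ^ Suc k * c) * G (trajectory T (T \<sigma> v) k s)))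
      + ennreal r * (ennreal (r ^ n) * \<Phi> (trajectory T (T \<sigma> v) n s))"
    unfolding discounted_sum_def sum.lessThan_Suc_shift trajectory_Suc_Stream by (simp add: mult.assoc)
  then show ?thesis
    unfolding discounted_sum_def by (simp add: sum_distrib_left distrib_left add.assoc)
qed

lemma measurable_discounted_sum:
  assumes "case_prod T \<in> measurable (S \<Otimes>\<^sub>M M) S" "G \<in> borel_measurable S" "\<Phi> \<in> borel_measurable S"
    and "\<sigma> \<in> space S"
  shows "discounted_sum T G \<Phi> r c n \<sigma> \<in> borel_measurable (stream_space M)"
proof -
  have "(\<lambda>s. trajectory T \<sigma> k s) \<in> measurable (stream_space M) S" for k
    using measurable_trajectory[OF assms(1) measurable_const[OF assms(4)] measurable_ident_sets[OF refl]]
    by simp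
  then have "(\<lambda>s. G (trajectory T \<sigma> k s)) \<in> borel_measurable (stream_space M)"
    and "(\<lambda>s. \<Phi> (trajectory T \<sigma> k s)) \<in> borel_measurable (stream_space M)" for k
    using assms(2,3) by (auto intro: measurable_compose)
  then show ?thesis
    unfolding discounted_sum_def by measurable
qed

context prob_space
begin

lemma nn_integral_discounted_drift_le:
  fixes T :: "'s \<Rightarrow> 'a \<Rightarrow> 's" and \<Phi> G :: "'s \<Rightarrow> ennreal"
  assumes T: "case_prod T \<in> measurable (S \<Otimes>\<^sub>M M) S"
    and \<Phi>: "\<Phi> \<in> borel_measurable S" and G: "G \<in> borel_measurable S"
    and drift: "\<And>\<sigma>. \<sigma> \<in> space S \<Longrightarrow>
      (\<integral>\<^sup>+v. \<Phi> (T \<sigma> v) \<partial>M) + ennreal c * G \<sigma> \<le> ennreal a * \<Phi> \<sigma> + ennreal b"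
    and "a > 0" "c \<ge> 0" "b \<ge> 0" and \<sigma>: "\<sigma> \<in> space S"
  shows "(\<integral>\<^sup>+s. discounted_sum T G \<Phi> (1 / a) c n \<sigma> s \<partial>stream_space M)
    \<le> \<Phi> \<sigma> + ennreal (b * (\<Sum>k<n. (1 / a) ^ Suc k))"
  using \<sigma>
proof (induction n arbitrary: \<sigma>)
  case 0
  interpret S: prob_space "stream_space M" by (rule prob_space_stream_space)
  show ?case by (simp add: discounted_sum_def S.emeasure_space_1)
next
  case (Suc n)
  interpret S: prob_space "stream_space M" by (rule prob_space_stream_space)
  define r where "r = 1 / a"
  have "r > 0" "ennreal r * ennreal a = 1"
    unfolding r_def using \<open>a > 0\<close> by (simp_all flip: ennreal_mult)
  define B where "B = b * (\<Sum>k<n. r ^ Suc k)"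
  have "B \<ge> 0" unfolding B_def using \<open>b \<ge> 0\<close> \<open>r > 0\<close> by (simp add: sum_nonneg)
  have T_space: "T \<sigma> v \<in> space S" if "v \<in> space M" for v
    using measurable_space[OF T, of "(\<sigma>, v)"] Suc.prems that by (simp add: space_pair_measure)
  have "(\<integral>\<^sup>+s. discounted_sum T G \<Phi> r c (Suc n) \<sigma> s \<partial>stream_space M)
      = (\<integral>\<^sup>+v. (\<integral>\<^sup>+s. discounted_sum T G \<Phi> r c (Suc n) \<sigma> (v ## s) \<partial>stream_space M) \<partial>M)"
    by (intro nn_integral_stream_space measurable_discounted_sum[OF T G \<Phi> Suc.prems])
  also have "\<dots> = (\<integral>\<^sup>+v. ennreal (r * c) * G \<sigma>
      + ennreal r * (\<integral>\<^sup>+s. discounted_sum T G \<Phi> r c n (T \<sigma> v) s \<partial>stream_space M) \<partial>M)"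
    using measurable_discounted_sum[OF T G \<Phi> T_space] \<open>r > 0\<close> \<open>c \<ge> 0\<close>
    by (intro nn_integral_cong)
      (simp add: discounted_sum_Suc_Stream nn_integral_add nn_integral_cmult S.emeasure_space_1)
  also have "\<dots> \<le> (\<integral>\<^sup>+v. ennreal (r * c) * G \<sigma> + ennreal r * (\<Phi> (T \<sigma> v) + ennreal B) \<partial>M)"
    using Suc.IH[OF T_space] unfolding r_def B_def
    by (intro nn_integral_mono add_left_mono mult_left_mono) auto
  also have "\<dots> = ennreal r * ((\<integral>\<^sup>+v. \<Phi> (T \<sigma> v) \<partial>M) + ennreal c * G \<sigma>) + ennreal r * ennreal B"
    using measurable_compose[OF measurable_Pair1'[OF Suc.prems] T] \<Phi> \<open>r > 0\<close> \<open>c \<ge> 0\<close>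
    by (simp add: nn_integral_add nn_integral_cmult emeasure_space_1 distrib_left ennreal_mult' add_ac mult_ac)
  also have "\<dots> \<le> ennreal r * (ennreal a * \<Phi> \<sigma> + ennreal b) + ennreal r * ennreal B"
    using drift[OF Suc.prems] by (intro add_right_mono mult_left_mono) auto
  also have "\<dots> = \<Phi> \<sigma> + ennreal (r * b + r * B)"
    using \<open>ennreal r * ennreal a = 1\<close> \<open>r > 0\<close> \<open>b \<ge> 0\<close> \<open>B \<ge> 0\<close>
    by (simp add: distrib_left mult.assoc[symmetric] add.assoc ennreal_mult)
  also have "r * b + r * B = b * (\<Sum>k<Suc n. r ^ Suc k)"
    unfolding B_def sum.lessThan_Suc_shift by (simp add: sum_distrib_left algebra_simps)
  finally show ?case unfolding r_def .
qed

end

lemma measurable_component [measurable]: "(\<lambda>v::real^'n::finite. v $ i) \<in> borel_measurable borel"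
  by measurable

locale unbiased_sampling = prob_space D for D :: "(real^'n::finite) measure" +
  assumes sets_D: "sets D = sets borel"
    and nonneg_D: "AE v in D. \<forall>i. v $ i \<ge> 0"
    and mean_D: "\<And>i. (\<integral>\<^sup>+ v. ennreal (v $ i) \<partial>D) = 1"
begin

lemma measurable_D_eq: "measurable D N = measurable borel N"
  by (rule measurable_cong_sets[OF sets_D refl])

lemma integrable_component: "integrable D (\<lambda>v. v $ i)"
proof (rule integrableI_nonneg)
  show "(\<lambda>v. v $ i) \<in> borel_measurable D"
    unfolding measurable_D_eq by measurable
  show "AE v in D. 0 \<le> v $ i"
    using nonneg_D by eventually_elim auto
qed (simp add: mean_D)

lemma integral_component: "(\<integral>v. v $ i \<partial>D) = 1"
proof -
  have "ennreal (\<integral>v. v $ i \<partial>D) = (\<integral>\<^sup>+ v. ennreal (v $ i) \<partial>D)"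
    using nonneg_D by (intro nn_integral_eq_integral[symmetric] integrable_component) auto
  then show ?thesis using mean_D by simp
qed

lemma measurable_Fv [measurable]:
  fixes Fs :: "'n \<Rightarrow> 'a::euclidean_space \<Rightarrow> 'a"
  shows "(\<lambda>v. Fv Fs v y) \<in> borel_measurable D"
  unfolding measurable_D_eq Fv_def by measurable

lemma integrable_Fv:
  fixes Fs :: "'n \<Rightarrow> 'a::euclidean_space \<Rightarrow> 'a"
  shows "integrable D (\<lambda>v. Fv Fs v y)"
  unfolding Fv_def using integrable_component by simp

lemma integral_Fv:
  fixes Fs :: "'n \<Rightarrow> 'a::euclidean_space \<Rightarrow> 'a"
  shows "(\<integral>v. Fv Fs v y \<partial>D) = Favg Fs y"
  using integrable_component by (simp add: Fv_def Favg_def integral_component)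

end

locale speg_step_sizes =
  fixes L \<rho> \<delta> \<sigma>sq \<gamma> \<omega> :: real
  assumes L_pos: "L > 0"
    and gamma: "max (2 * \<rho>) (1 / (2 * L)) < \<gamma>" "\<gamma> < 1 / L"
    and omega: "0 < \<omega>" "\<omega> < min (\<gamma> - 2 * \<rho>) (1 / (4 * L) - \<gamma> / 4)"
    and delta: "\<delta> \<ge> 0" "\<delta> \<le> (1 - L * \<gamma>) * L ^ 3 * \<omega> / 32"
    and sigma: "\<sigma>sq \<ge> 0"
begin

definition "p = 1 - L * \<gamma>"
definition "l = L * \<omega>"

text \<open>A weights the residual term of the Lyapunov function and M bounds the total coefficient of the
  variance terms; the factors 4/3 and 11 are chosen so that the three coefficient inequalities below hold.\<close>
definition "A = 4 * \<omega> * \<gamma> / (3 * p)"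
definition "M = 11 * \<omega> * \<gamma> / p\<^sup>2"

definition "rate = 1 + 4 * M * \<delta>"
definition "noise = 2 * M * \<sigma>sq"
definition "descent = \<omega> * \<gamma> * (p - 2 * l) / p"

lemma gamma_pos: "\<gamma> > 0"
  using gamma L_pos by (smt (verit) divide_pos_pos max.strict_boundedE)

lemma L_gamma_gt: "L * \<gamma> > 1 / 2"
  using gamma L_pos by (simp add: field_simps)

lemma L_gamma_lt: "L * \<gamma> < 1"
  using gamma L_pos by (simp add: field_simps)

lemma p_pos: "p > 0" and p_lt_half: "p < 1 / 2"
  using L_gamma_gt L_gamma_lt unfolding p_def by auto

lemma l_pos: "l > 0"
  unfolding l_def using L_pos omega by simp

lemma four_l_lt_p: "4 * l < p"
proof -
  have "4 * L * \<omega> < 4 * L * (1 / (4 * L) - \<gamma> / 4)"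
    using omega L_pos by simp
  also have "\<dots> = 1 - L * \<gamma>"
    using L_pos by (simp add: field_simps)
  finally show ?thesis unfolding l_def p_def by simp
qed

lemma l_div_p_le: "l / p \<le> 1 / 4"
  using four_l_lt_p p_pos by (simp add: field_simps)

lemma l_le: "l \<le> 1 / 8"
  using four_l_lt_p p_lt_half by simp

lemma two_rho_omega_le: "2 * \<rho> + \<omega> \<le> \<gamma>"
  using omega by simp

lemma delta_le_p_l: "\<delta> \<le> p * L\<^sup>2 * l / 32"
  using delta(2) unfolding p_def l_def by (simp add: power2_eq_square power3_eq_cube mult_ac)

lemma A_nonneg: "A \<ge> 0"
  unfolding A_def using omega gamma_pos p_pos by simp

lemma M_nonneg: "M \<ge> 0"
  unfolding M_def using omega gamma_pos p_pos by simp

lemma rate_ge_1: "rate \<ge> 1"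
  unfolding rate_def using M_nonneg delta by simp

lemma noise_nonneg: "noise \<ge> 0"
  unfolding noise_def using M_nonneg sigma by simp

lemma descent_pos: "descent > 0"
  unfolding descent_def using omega gamma_pos p_pos four_l_lt_p l_pos by simp

lemma delta_gamma_sq_le: "\<delta> * \<gamma>\<^sup>2 \<le> p * l / 32"
proof -
  have "\<delta> * \<gamma>\<^sup>2 \<le> p * L\<^sup>2 * l / 32 * \<gamma>\<^sup>2"
    using delta_le_p_l by (intro mult_right_mono) auto
  also have "\<dots> = p * l / 32 * (L * \<gamma>)\<^sup>2"
    by (simp add: power_mult_distrib)
  also have "\<dots> \<le> p * l / 32"
    using L_gamma_gt L_gamma_lt p_pos l_pos by (intro mult_left_le) (auto simp: abs_square_le_1)
  finally show ?thesis .
qed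

lemma residual_coeff_le: "\<omega> * \<gamma> + A * (L * \<gamma>) + 2 * (A * (2 * l\<^sup>2 / p)) \<le> A"
proof -
  define w where "w = \<omega> * \<gamma>"
  have "(l / p)\<^sup>2 \<le> (1 / 4)\<^sup>2"
    using l_div_p_le l_pos p_pos by (intro power_mono) auto
  then have "(16 / 3) * w * (l / p)\<^sup>2 \<le> (16 / 3) * w * (1 / 16)"
    unfolding w_def using omega gamma_pos by (intro mult_left_mono) (auto simp: power2_eq_square)
  moreover have "2 * (A * (2 * l\<^sup>2 / p)) = (16 / 3) * w * (l / p)\<^sup>2"
    unfolding A_def w_def using p_pos by (simp add: field_simps power2_eq_square)
  moreover have "A * (L * \<gamma>) = A - (4 / 3) * w"
    unfolding A_def w_def p_def using p_pos by (simp add: p_def field_simps)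
  ultimately show ?thesis unfolding w_def by linarith
qed

lemma gradient_coeff_le: "2 * (A * (2 * l\<^sup>2 / p)) + (4 / 3) * M * \<delta> * \<gamma>\<^sup>2 + descent \<le> \<omega> * \<gamma>"
proof -
  define r where "r = l / p"
  define w where "w = \<omega> * \<gamma>"
  have "w > 0" unfolding w_def using omega gamma_pos by simp
  have r: "0 \<le> r" "r \<le> 1 / 4"
    unfolding r_def using l_div_p_le l_pos p_pos by auto
  have "2 * (A * (2 * l\<^sup>2 / p)) = (16 / 3) * w * (r * r)"
    unfolding A_def r_def w_def using p_pos by (simp add: field_simps power2_eq_square)
  also have "\<dots> \<le> (16 / 3) * w * ((1 / 4) * r)"
    using r \<open>w > 0\<close> by (intro mult_left_mono mult_right_mono) auto
  finally have extrapolation: "2 * (A * (2 * l\<^sup>2 / p)) \<le> (4 / 3) * (w * r)" by (simp add: mult_ac)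
  have "\<delta> * \<gamma>\<^sup>2 / p\<^sup>2 \<le> r / 32"
    using delta_gamma_sq_le p_pos unfolding r_def by (simp add: field_simps power2_eq_square)
  then have "(44 / 3) * (w * (\<delta> * \<gamma>\<^sup>2 / p\<^sup>2)) \<le> (44 / 3) * (w * (r / 32))"
    using \<open>w > 0\<close> by (intro mult_left_mono) auto
  moreover have "(4 / 3) * M * \<delta> * \<gamma>\<^sup>2 = (44 / 3) * (w * (\<delta> * \<gamma>\<^sup>2 / p\<^sup>2))"
    unfolding M_def w_def by simp
  moreover have "descent = w - 2 * (w * r)"
    unfolding descent_def w_def r_def using p_pos by (simp add: field_simps)
  moreover have "0 \<le> w * r" using \<open>w > 0\<close> r by simp
  ultimately show ?thesis using extrapolation unfolding w_def by linarith
qed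

lemma variance_coeff_le: "\<omega>\<^sup>2 + A * (8 / p) \<le> M"
proof -
  have "p ^ 3 \<le> (1 / 2) ^ 3"
    using p_pos p_lt_half by (intro power_mono) auto
  have "\<omega> < p / (4 * L)"
    using four_l_lt_p L_pos unfolding l_def by (simp add: field_simps)
  then have "\<omega> * (3 * p\<^sup>2) \<le> p / (4 * L) * (3 * p\<^sup>2)"
    using p_pos by (intro mult_right_mono) auto
  also have "\<dots> = (3 / 4) * p ^ 3 / L"
    using L_pos by (simp add: field_simps power2_eq_square power3_eq_cube)
  also have "\<dots> \<le> (3 / 4) * (1 / 2) ^ 3 / L"
    using \<open>p ^ 3 \<le> (1 / 2) ^ 3\<close> L_pos by (intro divide_right_mono mult_left_mono) auto
  also have "\<dots> \<le> \<gamma>"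
    using L_gamma_gt L_pos by (simp add: field_simps)
  finally have "\<omega> * (\<omega> * (3 * p\<^sup>2)) \<le> \<omega> * \<gamma>"
    using omega by (intro mult_left_mono) auto
  then have "\<omega>\<^sup>2 \<le> \<omega> * \<gamma> / (3 * p\<^sup>2)"
    using p_pos by (simp add: pos_le_divide_eq power2_eq_square mult.assoc)
  moreover define z where "z = \<omega> * \<gamma> / p\<^sup>2"
  moreover have "A * (8 / p) = (32 / 3) * z" and "M = 11 * z"
    unfolding A_def M_def z_def using p_pos by (simp_all add: field_simps power2_eq_square)
  ultimately show ?thesis by simp
qed

text \<open>In the application E = \<parallel>x - x*\<parallel>^2, H = \<parallel>F xh - g\<parallel>^2, Fn = \<parallel>F xh\<parallel>^2, Gn = \<parallel>g\<parallel>^2,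
  X = \<parallel>xh - x*\<parallel>^2, ip = \<langle>x - x*, F xh\<rangle>, and S is the second moment of the sampled operator at the
  extrapolated point xh = x - \<gamma> g.\<close>
lemma lyapunov_drift_scalar:
  fixes E Fn Gn H S X ip :: real
  assumes "E \<ge> 0" "Fn \<ge> 0" "Gn \<ge> 0" "H \<ge> 0"
    and ip: "ip \<ge> - \<rho> * Fn + \<gamma> * (Fn + Gn - H) / 2"
    and S: "Fn \<le> S" "S \<le> \<delta> * X + Fn + 2 * \<sigma>sq"
    and X: "X \<le> 4 * E + (4 / 3) * \<gamma>\<^sup>2 * Gn"
    and Fn: "Fn \<le> 2 * Gn + 2 * H"
  shows "E - 2 * \<omega> * ip + \<omega>\<^sup>2 * S + A * (L * \<gamma>) * H + A * (2 * l\<^sup>2 / p) * Fn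
      + A * (8 / p) * (S - Fn) + descent * Gn \<le> rate * (E + A * H) + noise"
proof -
  define kf where "kf = A * (2 * l\<^sup>2 / p)"
  define kv where "kv = A * (8 / p)"
  have "kf \<ge> 0" unfolding kf_def using A_nonneg p_pos by simp
  have "2 * \<omega> * ip \<ge> 2 * \<omega> * (- \<rho> * Fn + \<gamma> * (Fn + Gn - H) / 2)"
    using ip omega by (intro mult_left_mono) auto
  moreover have "(\<omega>\<^sup>2 + kv) * (S - Fn) \<le> M * (S - Fn)"
    using variance_coeff_le S unfolding kv_def by (intro mult_right_mono) auto
  moreover have "M * (S - Fn) \<le> M * (\<delta> * X + 2 * \<sigma>sq)"
    using S M_nonneg by (intro mult_left_mono) auto
  moreover have "(M * \<delta>) * X \<le> (M * \<delta>) * (4 * E + (4 / 3) * \<gamma>\<^sup>2 * Gn)"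
    using X M_nonneg delta by (intro mult_left_mono) auto
  moreover have "(\<omega> * (2 * \<rho> + \<omega> - \<gamma>)) * Fn \<le> 0"
    using two_rho_omega_le omega \<open>Fn \<ge> 0\<close> by (intro mult_nonpos_nonneg mult_nonneg_nonpos) auto
  moreover have "kf * Fn \<le> kf * (2 * Gn + 2 * H)"
    using Fn \<open>kf \<ge> 0\<close> by (intro mult_left_mono) auto
  moreover have "(\<omega> * \<gamma> + A * (L * \<gamma>) + 2 * kf) * H \<le> A * H"
    using residual_coeff_le \<open>H \<ge> 0\<close> unfolding kf_def by (intro mult_right_mono) auto
  moreover have "A * H \<le> rate * (A * H)"
    using mult_right_mono[OF rate_ge_1, of "A * H"] A_nonneg \<open>H \<ge> 0\<close> by simp
  moreover have "(2 * kf + (4 / 3) * M * \<delta> * \<gamma>\<^sup>2 + descent) * Gn \<le> (\<omega> * \<gamma>) * Gn"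
    using gradient_coeff_le \<open>Gn \<ge> 0\<close> unfolding kf_def by (intro mult_right_mono) auto
  ultimately show ?thesis
    unfolding kf_def[symmetric] kv_def[symmetric] rate_def noise_def
    by (simp add: algebra_simps power2_eq_square)
qed

definition "growth = 1 + 48 * \<omega> * \<gamma> * \<delta> / (1 - L * \<gamma>)\<^sup>2"
definition "distance_coeff = (p + 8 * \<omega> * \<gamma> * (\<delta> + L\<^sup>2)) / (\<omega> * \<gamma> * (p - 4 * l))"
definition "noise_floor = 64 * \<sigma>sq / (p\<^sup>2 * (p - 4 * l))"

definition speg_bound :: "nat \<Rightarrow> real \<Rightarrow> real" where
  "speg_bound n E0 =
     (1 + 8 * \<omega> * \<gamma> * (\<delta> + L\<^sup>2) - L * \<gamma>)
       * (1 + 48 * \<omega> * \<gamma> * \<delta> / (1 - L * \<gamma>)\<^sup>2) ^ n * E0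
       / (\<omega> * \<gamma> * (1 - L * (\<gamma> + 4 * \<omega>)) * real n)
   + 8 * (8 + (1 - L * \<gamma>)\<^sup>2 / real n * (1 + 48 * \<omega> * \<gamma> * \<delta> / (1 - L * \<gamma>)\<^sup>2) ^ n) * \<sigma>sq
       / ((1 - L * \<gamma>)\<^sup>2 * (1 - L * (\<gamma> + 4 * \<omega>)))"

definition "initial_bound E0 = (1 + A * (2 * L\<^sup>2 + 4 * \<delta>)) * E0 + 8 * A * \<sigma>sq"
definition "first_residual_bound E0 = L\<^sup>2 * (2 * E0 + 2 * \<gamma>\<^sup>2 * ((\<delta> + L\<^sup>2) * E0 + 2 * \<sigma>sq))"

lemma initial_bound_nonneg: "E0 \<ge> 0 \<Longrightarrow> initial_bound E0 \<ge> 0"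
  unfolding initial_bound_def using A_nonneg delta sigma by simp

lemma distance_coeff_nonneg: "distance_coeff \<ge> 0"
  unfolding distance_coeff_def using p_pos omega gamma_pos delta four_l_lt_p by simp

lemma speg_bound_ge:
  assumes "n \<ge> 1" "E0 \<ge> 0"
  shows "growth ^ n / n * distance_coeff * E0 + noise_floor \<le> speg_bound n E0"
proof -
  have denominator: "1 - L * (\<gamma> + 4 * \<omega>) = p - 4 * l"
    unfolding p_def l_def by (simp add: algebra_simps)
  have "0 \<le> 8 * ((1 - L * \<gamma>)\<^sup>2 / real n * growth ^ n) * \<sigma>sq"
    unfolding growth_def using delta omega gamma_pos sigma by simp
  then have "64 * \<sigma>sq \<le> 8 * (8 + (1 - L * \<gamma>)\<^sup>2 / real n * growth ^ n) * \<sigma>sq"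
    by (simp add: algebra_simps)
  then have "noise_floor \<le> 8 * (8 + (1 - L * \<gamma>)\<^sup>2 / real n * growth ^ n) * \<sigma>sq
      / ((1 - L * \<gamma>)\<^sup>2 * (1 - L * (\<gamma> + 4 * \<omega>)))"
    unfolding noise_floor_def denominator p_def[symmetric] using p_pos four_l_lt_p
    by (intro divide_right_mono) auto
  moreover have "growth ^ n / n * distance_coeff * E0
      = (1 + 8 * \<omega> * \<gamma> * (\<delta> + L\<^sup>2) - L * \<gamma>) * growth ^ n * E0
        / (\<omega> * \<gamma> * (1 - L * (\<gamma> + 4 * \<omega>)) * real n)"
    unfolding distance_coeff_def denominator p_def by (simp add: mult_ac)
  ultimately show ?thesis
    unfolding speg_bound_def growth_def by simp
qed

lemma omega_gamma_L_sq_le: "\<omega> * \<gamma> * L\<^sup>2 \<le> 1 / 8"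
proof -
  have "\<omega> * \<gamma> * L\<^sup>2 = l * (L * \<gamma>)"
    unfolding l_def by (simp add: power2_eq_square)
  also have "\<dots> \<le> 1 / 8 * 1"
    using l_le l_pos L_gamma_lt L_gamma_gt by (intro mult_mono) auto
  finally show ?thesis by simp
qed

lemma rate_le_growth: "rate \<le> growth"
  unfolding rate_def growth_def M_def p_def[symmetric]
  using delta omega gamma_pos p_pos by (simp add: field_simps)

lemma rate_excess_le: "(rate - 1) * p \<le> 44 / 256 * (\<omega> * \<gamma> * L\<^sup>2)" "rate - 1 \<le> 1 / 20"
proof -
  have excess: "rate - 1 = 44 * (\<omega> * \<gamma>) * (\<delta> / p) / p"
    unfolding rate_def M_def by (simp add: power2_eq_square)
  have "\<delta> / p \<le> L\<^sup>2 * l / 32"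
    using delta_le_p_l p_pos by (simp add: field_simps)
  also have "\<dots> \<le> L\<^sup>2 * (1 / 8) / 32"
    using l_le by (intro divide_right_mono mult_left_mono) auto
  finally have "44 * (\<omega> * \<gamma>) * (\<delta> / p) \<le> 44 * (\<omega> * \<gamma>) * (L\<^sup>2 * (1 / 8) / 32)"
    using omega gamma_pos by (intro mult_left_mono) auto
  then show "(rate - 1) * p \<le> 44 / 256 * (\<omega> * \<gamma> * L\<^sup>2)"
    unfolding excess using p_pos by (simp add: mult_ac)
  have "(\<delta> / p) / p \<le> L\<^sup>2 * (l / p) / 32"
    using delta_le_p_l p_pos by (simp add: field_simps power2_eq_square)
  also have "\<dots> \<le> L\<^sup>2 * (1 / 4) / 32"
    using l_div_p_le by (intro divide_right_mono mult_left_mono) auto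
  finally have "44 * (\<omega> * \<gamma>) * ((\<delta> / p) / p) \<le> 44 * (\<omega> * \<gamma>) * (L\<^sup>2 * (1 / 4) / 32)"
    using omega gamma_pos by (intro mult_left_mono) auto
  also have "\<dots> \<le> 44 / 128 * (1 / 8)"
    using omega_gamma_L_sq_le by (simp add: field_simps)
  finally show "rate - 1 \<le> 1 / 20"
    unfolding excess by simp
qed

lemma initial_coeff_le: "rate * (1 + A * (2 * L\<^sup>2 + 4 * \<delta>)) / descent \<le> distance_coeff"
proof -
  define w where "w = \<omega> * \<gamma>"
  define X where "X = (4 / 3) * w * (2 * L\<^sup>2 + 4 * \<delta>)"
  have "w > 0" unfolding w_def using omega gamma_pos by simp
  have "(rate - 1) * X \<le> (1 / 20) * X"
    using rate_excess_le(2) \<open>w > 0\<close> delta unfolding X_def by (intro mult_right_mono) auto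
  then have "rate * (p + X) \<le> p + X + 44 / 256 * (w * L\<^sup>2) + X / 20"
    using rate_excess_le(1) unfolding w_def by (simp add: algebra_simps)
  also have "\<dots> \<le> p + 8 * w * (\<delta> + L\<^sup>2)"
  proof -
    have "w * L\<^sup>2 \<ge> 0" "w * \<delta> \<ge> 0"
      using \<open>w > 0\<close> delta by simp_all
    moreover have "X = (8 / 3) * (w * L\<^sup>2) + (16 / 3) * (w * \<delta>)"
      "8 * w * (\<delta> + L\<^sup>2) = 8 * (w * \<delta>) + 8 * (w * L\<^sup>2)"
      unfolding X_def by (simp_all add: algebra_simps)
    ultimately show ?thesis by linarith
  qed
  finally have numerator: "rate * (p + X) \<le> p + 8 * w * (\<delta> + L\<^sup>2)" .
  have "1 + A * (2 * L\<^sup>2 + 4 * \<delta>) = (p + X) / p" "descent = w * (p - 2 * l) / p"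
    unfolding descent_def A_def X_def w_def using p_pos by (simp_all add: field_simps)
  then have "rate * (1 + A * (2 * L\<^sup>2 + 4 * \<delta>)) / descent = rate * (p + X) / (w * (p - 2 * l))"
    using p_pos by simp
  also have "\<dots> \<le> (p + 8 * w * (\<delta> + L\<^sup>2)) / (w * (p - 2 * l))"
    using numerator \<open>w > 0\<close> four_l_lt_p l_pos by (intro divide_right_mono) auto
  also have "\<dots> \<le> (p + 8 * w * (\<delta> + L\<^sup>2)) / (w * (p - 4 * l))"
    using \<open>w > 0\<close> four_l_lt_p l_pos p_pos delta
    by (intro divide_left_mono mult_left_mono mult_pos_pos) auto
  finally show ?thesis unfolding distance_coeff_def w_def by (simp add: mult.assoc)
qed

lemma noise_coeff_le: "(rate * (8 * A * \<sigma>sq) + 2 * noise) / descent \<le> noise_floor"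
proof -
  define w where "w = \<omega> * \<gamma>"
  have "w > 0" unfolding w_def using omega gamma_pos by simp
  have "rate * (8 * A * \<sigma>sq) \<le> 2 * (8 * A * \<sigma>sq)"
    using rate_excess_le(2) A_nonneg sigma by (intro mult_right_mono) auto
  also have "2 * (8 * A * \<sigma>sq) + 2 * noise = w * \<sigma>sq * ((64 / 3) * p\<^sup>2 + 44 * p) / p ^ 3"
    unfolding A_def noise_def M_def w_def using p_pos by (simp add: field_simps power2_eq_square power3_eq_cube)
  finally have "rate * (8 * A * \<sigma>sq) + 2 * noise \<le> w * \<sigma>sq * ((64 / 3) * p\<^sup>2 + 44 * p) / p ^ 3"
    by simp
  also have "\<dots> \<le> w * \<sigma>sq * 64 / p ^ 3"
  proof -
    have "p\<^sup>2 \<le> 1 / 4"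
      using power_mono[of p "1 / 2" 2] p_pos p_lt_half by (simp add: power2_eq_square)
    then have "(64 / 3) * p\<^sup>2 + 44 * p \<le> 64"
      using p_lt_half by linarith
    then show ?thesis
      using \<open>w > 0\<close> sigma p_pos by (intro divide_right_mono mult_left_mono) auto
  qed
  also have "\<dots> = noise_floor * (w * (p - 4 * l) / p)"
    unfolding noise_floor_def using p_pos four_l_lt_p \<open>w > 0\<close>
    by (simp add: field_simps power2_eq_square power3_eq_cube)
  also have "\<dots> \<le> noise_floor * descent"
    unfolding descent_def w_def[symmetric] noise_floor_def
    using \<open>w > 0\<close> p_pos four_l_lt_p l_pos sigma
    by (intro mult_left_mono divide_right_mono) auto
  finally show ?thesis
    using descent_pos by (simp add: pos_divide_le_eq)
qed

lemma first_residual_bound_le: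
  assumes "E0 \<ge> 0"
  shows "first_residual_bound E0 \<le> distance_coeff * E0 + noise_floor"
proof -
  have "(L * \<gamma>)\<^sup>2 \<le> 1"
    using L_gamma_gt L_gamma_lt by (simp add: abs_square_le_1)
  have "\<delta> * \<gamma>\<^sup>2 \<le> 1"
    using delta_gamma_sq_le mult_mono[OF less_imp_le[OF p_lt_half] l_le] p_pos l_pos by simp
  have "L\<^sup>2 * (\<delta> * \<gamma>\<^sup>2) \<le> L\<^sup>2" "L\<^sup>2 * (L * \<gamma>)\<^sup>2 \<le> L\<^sup>2"
    using mult_left_mono[OF \<open>\<delta> * \<gamma>\<^sup>2 \<le> 1\<close>, of "L\<^sup>2"] mult_left_mono[OF \<open>(L * \<gamma>)\<^sup>2 \<le> 1\<close>, of "L\<^sup>2"]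
    by simp_all
  then have "2 * L\<^sup>2 + 2 * (L\<^sup>2 * (\<delta> * \<gamma>\<^sup>2)) + 2 * (L\<^sup>2 * (L * \<gamma>)\<^sup>2) \<le> 8 * L\<^sup>2"
    using zero_le_power2[of L] by linarith
  also have "8 * L\<^sup>2 \<le> distance_coeff"
  proof -
    have "8 * L\<^sup>2 * (\<omega> * \<gamma> * (p - 4 * l)) = 8 * (\<omega> * \<gamma> * L\<^sup>2) * (p - 4 * l)"
      by (simp add: mult_ac)
    also have "\<dots> \<le> p - 4 * l"
      using mult_right_mono[OF omega_gamma_L_sq_le, of "p - 4 * l"] four_l_lt_p by simp
    also have "\<dots> \<le> p + 8 * \<omega> * \<gamma> * (\<delta> + L\<^sup>2)"
      using l_pos omega gamma_pos delta by (smt (verit) mult_nonneg_nonneg zero_le_power2)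
    finally show ?thesis
      unfolding distance_coeff_def using omega gamma_pos four_l_lt_p by (simp add: pos_le_divide_eq)
  qed
  finally have distance: "2 * L\<^sup>2 + 2 * (L\<^sup>2 * (\<delta> * \<gamma>\<^sup>2)) + 2 * (L\<^sup>2 * (L * \<gamma>)\<^sup>2) \<le> distance_coeff" .
  have "p\<^sup>2 * (p - 4 * l) \<le> 1 * 1"
    using p_pos p_lt_half l_pos four_l_lt_p by (intro mult_mono) (auto simp: power_le_one)
  then have "\<sigma>sq * (p\<^sup>2 * (p - 4 * l)) \<le> 16 * \<sigma>sq"
    using mult_left_mono[of "p\<^sup>2 * (p - 4 * l)" 1 \<sigma>sq] sigma by simp
  then have "4 * \<sigma>sq \<le> noise_floor"
    unfolding noise_floor_def using p_pos four_l_lt_p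
    by (simp add: pos_le_divide_eq mult_ac)
  moreover have "4 * (L * \<gamma>)\<^sup>2 * \<sigma>sq \<le> 4 * \<sigma>sq"
    using \<open>(L * \<gamma>)\<^sup>2 \<le> 1\<close> sigma by (simp add: mult_left_le_one_le)
  moreover have "first_residual_bound E0
      = (2 * L\<^sup>2 + 2 * (L\<^sup>2 * (\<delta> * \<gamma>\<^sup>2)) + 2 * (L\<^sup>2 * (L * \<gamma>)\<^sup>2)) * E0 + 4 * (L * \<gamma>)\<^sup>2 * \<sigma>sq"
    unfolding first_residual_bound_def by (simp add: algebra_simps power2_eq_square)
  ultimately show ?thesis
    using mult_right_mono[OF distance assms] by linarith
qed

lemma averaged_bound_le_speg_bound:
  assumes "n \<ge> 1" "rate ^ n / n \<le> 1" "E0 \<ge> 0"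
  shows "(rate * initial_bound E0 + noise + noise * (\<Sum>k<n. (1 / rate) ^ Suc k))
      / (descent * (\<Sum>k<n. (1 / rate) ^ Suc k)) \<le> speg_bound n E0"
proof -
  define B where "B = (\<Sum>k<n. (1 / rate) ^ Suc k)"
  define R where "R = rate ^ n / n"
  define \<Phi>0 where "\<Phi>0 = rate * initial_bound E0 + noise"
  have "real n * (1 / rate) ^ n \<le> B"
    unfolding B_def using rate_ge_1 by (intro geometric_sum_ge) auto
  moreover have "real n * (1 / rate) ^ n > 0"
    using assms(1) rate_ge_1 by simp
  ultimately have "B > 0" by linarith
  have "1 / B \<le> 1 / (real n * (1 / rate) ^ n)"
    using \<open>real n * (1 / rate) ^ n \<le> B\<close> \<open>real n * (1 / rate) ^ n > 0\<close> by (intro divide_left_mono) auto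
  also have "\<dots> = R"
    unfolding R_def by (simp add: power_one_over)
  finally have "1 / B \<le> R" .
  have initial_coeff_nonneg: "0 \<le> rate * (1 + A * (2 * L\<^sup>2 + 4 * \<delta>)) / descent"
    using rate_ge_1 A_nonneg delta descent_pos by simp
  have noise_coeff_nonneg: "0 \<le> (rate * (8 * A * \<sigma>sq) + noise) / descent"
    using rate_ge_1 A_nonneg sigma noise_nonneg descent_pos by simp
  have "R \<le> growth ^ n / n"
    unfolding R_def using rate_le_growth rate_ge_1 by (intro divide_right_mono power_mono) auto
  have "(\<Phi>0 + noise * B) / (descent * B) = 1 / B * (\<Phi>0 / descent) + noise / descent"
    using \<open>B > 0\<close> descent_pos by (simp add: field_simps)
  also have "\<dots> \<le> R * (\<Phi>0 / descent) + noise / descent"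
    using \<open>1 / B \<le> R\<close> rate_ge_1 A_nonneg delta sigma noise_nonneg descent_pos \<open>E0 \<ge> 0\<close>
    unfolding \<Phi>0_def initial_bound_def by (intro add_right_mono mult_right_mono) auto
  also have "R * (\<Phi>0 / descent) = R * (rate * (1 + A * (2 * L\<^sup>2 + 4 * \<delta>)) / descent) * E0
      + R * ((rate * (8 * A * \<sigma>sq) + noise) / descent)"
    unfolding \<Phi>0_def initial_bound_def using descent_pos by (simp add: field_simps)
  also have "\<dots> \<le> growth ^ n / n * distance_coeff * E0 + 1 * ((rate * (8 * A * \<sigma>sq) + noise) / descent)"
    using \<open>R \<le> growth ^ n / n\<close> assms(2) initial_coeff_le initial_coeff_nonneg noise_coeff_nonneg \<open>E0 \<ge> 0\<close>
      rate_le_growth rate_ge_1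
    unfolding R_def by (intro add_mono mult_right_mono mult_mono) auto
  finally have "(\<Phi>0 + noise * B) / (descent * B)
      \<le> growth ^ n / n * distance_coeff * E0 + (rate * (8 * A * \<sigma>sq) + 2 * noise) / descent"
    by (simp add: add_divide_distrib)
  also have "\<dots> \<le> growth ^ n / n * distance_coeff * E0 + noise_floor"
    using noise_coeff_le by simp
  also have "\<dots> \<le> speg_bound n E0"
    using speg_bound_ge assms by simp
  finally show ?thesis unfolding \<Phi>0_def B_def .
qed

lemma first_residual_bound_le_speg_bound:
  assumes "n \<ge> 1" "1 < rate ^ n / n" "E0 \<ge> 0"
  shows "first_residual_bound E0 \<le> speg_bound n E0"
proof -
  have "1 \<le> growth ^ n / n"
    using assms(2) rate_le_growth rate_ge_1
    by (smt (verit) divide_right_mono of_nat_0_le_iff power_mono)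
  then have "distance_coeff * E0 \<le> growth ^ n / n * distance_coeff * E0"
    using distance_coeff_nonneg \<open>E0 \<ge> 0\<close> mult_right_mono[of 1 "growth ^ n / n" "distance_coeff * E0"]
    by (simp add: mult.assoc)
  then show ?thesis
    using first_residual_bound_le[OF \<open>E0 \<ge> 0\<close>] speg_bound_ge[OF assms(1,3)] by linarith
qed

end

section \<open>Lyapunov drift of SPEG\<close>

locale speg_setting = unbiased_sampling D + speg_step_sizes L \<rho> \<delta> \<sigma>sq \<gamma> \<omega>
  for D :: "(real^'n::finite) measure" and L \<rho> \<delta> \<sigma>sq \<gamma> \<omega> :: real +
  fixes Fs :: "'n \<Rightarrow> 'a::euclidean_space \<Rightarrow> 'a" and xstar :: 'a
  assumes Fs_measurable [measurable]: "\<And>i. Fs i \<in> borel_measurable borel"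
    and solution: "Favg Fs xstar = 0"
    and lipschitz: "\<And>x y. norm (Favg Fs x - Favg Fs y) \<le> L * norm (x - y)"
    and weak_minty: "\<And>x. inner (Favg Fs x) (x - xstar) \<ge> - \<rho> * (norm (Favg Fs x))\<^sup>2"
    and second_moment_bound: "\<And>x. (\<integral>\<^sup>+ v. ennreal ((norm (Fv Fs v x))\<^sup>2) \<partial>D)
      \<le> ennreal (\<delta> * (norm (x - xstar))\<^sup>2 + (norm (Favg Fs x))\<^sup>2 + 2 * \<sigma>sq)"
begin

abbreviation "F \<equiv> Favg Fs"

lemma norm_F_le: "norm (F y) \<le> L * norm (y - xstar)"
  using lipschitz[of y xstar] solution by simp

lemma integrable_sq_Fv: "integrable D (\<lambda>v. (norm (Fv Fs v y))\<^sup>2)"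
  using second_moment_bound[of y] by (intro integrableI_nonneg) (auto simp: le_less_trans)

definition "second_moment y = (\<integral>v. (norm (Fv Fs v y))\<^sup>2 \<partial>D)"

lemma nn_integral_sq_Fv: "(\<integral>\<^sup>+ v. ennreal ((norm (Fv Fs v y))\<^sup>2) \<partial>D) = ennreal (second_moment y)"
  unfolding second_moment_def by (intro nn_integral_eq_integral integrable_sq_Fv) auto

lemma second_moment_le: "second_moment y \<le> \<delta> * (norm (y - xstar))\<^sup>2 + (norm (F y))\<^sup>2 + 2 * \<sigma>sq"
proof -
  have "ennreal (second_moment y) \<le> ennreal (\<delta> * (norm (y - xstar))\<^sup>2 + (norm (F y))\<^sup>2 + 2 * \<sigma>sq)"
    using second_moment_bound[of y] by (simp only: nn_integral_sq_Fv)
  then show ?thesis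
    using delta sigma by (subst (asm) ennreal_le_iff) auto
qed

lemma integrable_sq_affine_Fv: "integrable D (\<lambda>v. (norm (z + a *\<^sub>R Fv Fs v y))\<^sup>2)"
  unfolding power2_norm_add_scaleR using integrable_Fv[of Fs y] integrable_sq_Fv[of y] by simp

lemma integral_sq_affine_Fv:
  "(\<integral>v. (norm (z + a *\<^sub>R Fv Fs v y))\<^sup>2 \<partial>D) = (norm z)\<^sup>2 + 2 * a * inner z (F y) + a\<^sup>2 * second_moment y"
  unfolding power2_norm_add_scaleR second_moment_def using integrable_Fv[of Fs y] integrable_sq_Fv[of y]
  by (simp add: integral_Fv prob_space)

lemma integrable_sq_Fv_deviation: "integrable D (\<lambda>v. (norm (Fv Fs v y - F y))\<^sup>2)"
  using integrable_sq_affine_Fv[of "- F y" 1 y] by (simp add: algebra_simps)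

lemma integral_sq_Fv_deviation: "(\<integral>v. (norm (Fv Fs v y - F y))\<^sup>2 \<partial>D) = second_moment y - (norm (F y))\<^sup>2"
  using integral_sq_affine_Fv[of "- F y" 1 y] by (simp add: power2_norm_eq_inner algebra_simps)

lemma sq_F_le_second_moment: "(norm (F y))\<^sup>2 \<le> second_moment y"
proof -
  have "0 \<le> (\<integral>v. (norm (Fv Fs v y - F y))\<^sup>2 \<partial>D)" by simp
  then show ?thesis using integral_sq_Fv_deviation by simp
qed

text \<open>A state (x, g) consists of the iterate x_k and the last sampled operator value
  g = F_{v_{k-1}}(xhat_{k-1}), so that xhat gives the extrapolated point xhat_k; the initial state is
  (x_0, F_{v_{-1}}(x_0)) because xhat_{-1} = x_0.\<close>
definition xhat :: "'a \<times> 'a \<Rightarrow> 'a" where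
  "xhat \<sigma> = fst \<sigma> - \<gamma> *\<^sub>R snd \<sigma>"

definition speg_step :: "'a \<times> 'a \<Rightarrow> real^'n \<Rightarrow> 'a \<times> 'a" where
  "speg_step \<sigma> v = (fst \<sigma> - \<omega> *\<^sub>R Fv Fs v (xhat \<sigma>), Fv Fs v (xhat \<sigma>))"

definition lyapunov :: "'a \<times> 'a \<Rightarrow> real" where
  "lyapunov \<sigma> = (norm (fst \<sigma> - xstar))\<^sup>2 + A * (norm (F (xhat \<sigma>) - snd \<sigma>))\<^sup>2"

lemma lyapunov_nonneg: "lyapunov \<sigma> \<ge> 0"
  unfolding lyapunov_def using A_nonneg by simp

lemma inner_F_xhat_ge:
  "inner (x - xstar) (F (x - \<gamma> *\<^sub>R g))
    \<ge> - \<rho> * (norm (F (x - \<gamma> *\<^sub>R g)))\<^sup>2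
      + \<gamma> * ((norm (F (x - \<gamma> *\<^sub>R g)))\<^sup>2 + (norm g)\<^sup>2 - (norm (F (x - \<gamma> *\<^sub>R g) - g))\<^sup>2) / 2"
proof -
  define f where "f = F (x - \<gamma> *\<^sub>R g)"
  have "inner (x - xstar) f = inner f ((x - \<gamma> *\<^sub>R g) - xstar) + \<gamma> * inner f g"
    by (simp add: inner_diff_left inner_diff_right inner_commute)
  moreover have "inner f ((x - \<gamma> *\<^sub>R g) - xstar) \<ge> - \<rho> * (norm f)\<^sup>2"
    unfolding f_def by (rule weak_minty)
  moreover have "2 * inner f g = (norm f)\<^sup>2 + (norm g)\<^sup>2 - (norm (f - g))\<^sup>2"
    by (simp add: power2_norm_eq_inner inner_diff_left inner_diff_right inner_commute)
  then have "\<gamma> * inner f g = \<gamma> * ((norm f)\<^sup>2 + (norm g)\<^sup>2 - (norm (f - g))\<^sup>2) / 2"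
    by (metis nonzero_mult_div_cancel_left times_divide_eq_right zero_neq_numeral)
  ultimately show ?thesis unfolding f_def[symmetric] by linarith
qed

lemma lyapunov_speg_step_le:
  fixes x g :: 'a and v :: "real^'n"
  defines "f \<equiv> F (x - \<gamma> *\<^sub>R g)" and "g' \<equiv> Fv Fs v (x - \<gamma> *\<^sub>R g)"
  shows "lyapunov (speg_step (x, g) v) \<le> (norm ((x - xstar) + (- \<omega>) *\<^sub>R g'))\<^sup>2
    + A * (L * \<gamma>) * (norm (f - g))\<^sup>2 + A * (2 * l\<^sup>2 / p) * (norm f)\<^sup>2 + A * (8 / p) * (norm (g' - f))\<^sup>2"
proof -
  have "(norm (F (x - \<omega> *\<^sub>R g' - \<gamma> *\<^sub>R g') - g'))\<^sup>2
      \<le> L * \<gamma> * (norm (f - g))\<^sup>2 + (2 * l\<^sup>2 * (norm f)\<^sup>2 + 8 * (norm (g' - f))\<^sup>2) / p"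
    using lipschitz_extrapolation_residual_le[OF lipschitz L_pos gamma_pos omega(1) L_gamma_lt]
      four_l_lt_p l_pos unfolding f_def l_def p_def by simp
  then have "A * (norm (F (x - \<omega> *\<^sub>R g' - \<gamma> *\<^sub>R g') - g'))\<^sup>2
      \<le> A * (L * \<gamma>) * (norm (f - g))\<^sup>2 + A * (2 * l\<^sup>2 / p) * (norm f)\<^sup>2 + A * (8 / p) * (norm (g' - f))\<^sup>2"
    using A_nonneg mult_left_mono by (fastforce simp: algebra_simps add_divide_distrib)
  then show ?thesis
    unfolding lyapunov_def speg_step_def xhat_def g'_def by (simp add: algebra_simps)
qed

lemma expected_lyapunov_step_le:
  fixes x g :: 'a
  defines "xh \<equiv> x - \<gamma> *\<^sub>R g" and "f \<equiv> F (x - \<gamma> *\<^sub>R g)"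
  shows "(norm (x - xstar))\<^sup>2 - 2 * \<omega> * inner (x - xstar) f + \<omega>\<^sup>2 * second_moment xh
      + A * (L * \<gamma>) * (norm (f - g))\<^sup>2 + A * (2 * l\<^sup>2 / p) * (norm f)\<^sup>2
      + A * (8 / p) * (second_moment xh - (norm f)\<^sup>2) + descent * (norm g)\<^sup>2
    \<le> rate * lyapunov (x, g) + noise"
proof -
  have dist_xhat: "(norm (xh - xstar))\<^sup>2 \<le> 4 * (norm (x - xstar))\<^sup>2 + (4 / 3) * \<gamma>\<^sup>2 * (norm g)\<^sup>2"
    using norm_add_sq_le_weighted[of 3 "x - xstar" "(- \<gamma>) *\<^sub>R g"] unfolding xh_def
    by (simp add: algebra_simps)
  have norm_f: "(norm f)\<^sup>2 \<le> 2 * (norm g)\<^sup>2 + 2 * (norm (f - g))\<^sup>2"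
    using norm_add_sq_le_weighted[of 1 g "f - g"] by simp
  have "lyapunov (x, g) = (norm (x - xstar))\<^sup>2 + A * (norm (f - g))\<^sup>2"
    unfolding lyapunov_def xhat_def f_def by simp
  moreover have "inner (x - xstar) f \<ge> - \<rho> * (norm f)\<^sup>2 + \<gamma> * ((norm f)\<^sup>2 + (norm g)\<^sup>2 - (norm (f - g))\<^sup>2) / 2"
    using inner_F_xhat_ge[of x g] unfolding f_def .
  moreover have "(norm f)\<^sup>2 \<le> second_moment xh" "second_moment xh \<le> \<delta> * (norm (xh - xstar))\<^sup>2 + (norm f)\<^sup>2 + 2 * \<sigma>sq"
    using sq_F_le_second_moment[of xh] second_moment_le[of xh] unfolding f_def xh_def by simp_all
  ultimately show ?thesis
    using lyapunov_drift_scalar[OF zero_le_power2 zero_le_power2 zero_le_power2 zero_le_power2 _ _ _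
        dist_xhat norm_f]
    by simp
qed

lemma lyapunov_drift:
  "(\<integral>\<^sup>+v. ennreal (lyapunov (speg_step \<sigma> v)) \<partial>D) + ennreal (descent * (norm (snd \<sigma>))\<^sup>2)
    \<le> ennreal (rate * lyapunov \<sigma> + noise)"
proof -
  obtain x g where \<sigma>: "\<sigma> = (x, g)" by fastforce
  define xh where "xh = x - \<gamma> *\<^sub>R g"
  define f where "f = F xh"
  define bound where "bound v = (norm ((x - xstar) + (- \<omega>) *\<^sub>R Fv Fs v xh))\<^sup>2 + A * (L * \<gamma>) * (norm (f - g))\<^sup>2
    + A * (2 * l\<^sup>2 / p) * (norm f)\<^sup>2 + A * (8 / p) * (norm (Fv Fs v xh - f))\<^sup>2" for v
  have bound_nonneg: "bound v \<ge> 0" for v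
    unfolding bound_def using A_nonneg L_pos gamma_pos p_pos by simp
  have integrable_bound: "integrable D bound"
    unfolding bound_def f_def
    using integrable_sq_affine_Fv[of "x - xstar" "- \<omega>" xh] integrable_sq_Fv_deviation[of xh] by auto
  have "(\<integral>\<^sup>+v. ennreal (lyapunov (speg_step (x, g) v)) \<partial>D) \<le> ennreal (\<integral>v. bound v \<partial>D)"
    using lyapunov_speg_step_le integrable_bound bound_nonneg unfolding bound_def xh_def f_def
    by (intro nn_integral_le_integral_bound) simp_all
  then have "(\<integral>\<^sup>+v. ennreal (lyapunov (speg_step (x, g) v)) \<partial>D) + ennreal (descent * (norm g)\<^sup>2)
      \<le> ennreal ((\<integral>v. bound v \<partial>D) + descent * (norm g)\<^sup>2)"
    using integral_nonneg_AE[of bound D] bound_nonneg descent_pos by (simp add: add_right_mono)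
  also have "(\<integral>v. bound v \<partial>D) = (norm (x - xstar))\<^sup>2 - 2 * \<omega> * inner (x - xstar) f
      + \<omega>\<^sup>2 * second_moment xh + A * (L * \<gamma>) * (norm (f - g))\<^sup>2 + A * (2 * l\<^sup>2 / p) * (norm f)\<^sup>2
      + A * (8 / p) * (second_moment xh - (norm f)\<^sup>2)"
    unfolding bound_def f_def
    using integrable_sq_affine_Fv[of "x - xstar" "- \<omega>" xh] integrable_sq_Fv_deviation[of xh]
      integral_sq_affine_Fv[of "x - xstar" "- \<omega>" xh] integral_sq_Fv_deviation[of xh]
    by (simp add: prob_space)
  also have "\<dots> + descent * (norm g)\<^sup>2 \<le> rate * lyapunov (x, g) + noise"
    using expected_lyapunov_step_le[of x g] unfolding xh_def f_def .
  finally show ?thesis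
    unfolding \<sigma> by (simp add: ennreal_leI order_trans)
qed

abbreviation state_space :: "('a \<times> 'a) measure" where
  "state_space \<equiv> borel \<Otimes>\<^sub>M borel"

lemma measurable_speg_step: "case_prod speg_step \<in> measurable (state_space \<Otimes>\<^sub>M D) state_space"
proof -
  have "measurable (state_space \<Otimes>\<^sub>M D) state_space = measurable (state_space \<Otimes>\<^sub>M borel) state_space"
    by (rule measurable_cong_sets[OF sets_pair_measure_cong[OF refl sets_D] refl])
  then show ?thesis
    unfolding case_prod_beta' speg_step_def xhat_def Fv_def by simp
qed

lemma measurable_lyapunov [measurable]: "lyapunov \<in> borel_measurable state_space"
  unfolding lyapunov_def xhat_def Favg_def by measurable

definition sq_residual :: "'a \<times> 'a \<Rightarrow> ennreal" where
  "sq_residual \<sigma> = ennreal ((norm (F (xhat \<sigma>)))\<^sup>2)"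

lemma measurable_sq_residual [measurable]: "sq_residual \<in> borel_measurable state_space"
  unfolding sq_residual_def xhat_def Favg_def by measurable

definition next_lyapunov :: "'a \<times> 'a \<Rightarrow> ennreal" where
  "next_lyapunov \<sigma> = (\<integral>\<^sup>+v. ennreal (lyapunov (speg_step \<sigma> v)) \<partial>D)"

lemma measurable_next_lyapunov [measurable]: "next_lyapunov \<in> borel_measurable state_space"
proof -
  have "(\<lambda>(\<sigma>, v). ennreal (lyapunov (speg_step \<sigma> v))) \<in> borel_measurable (state_space \<Otimes>\<^sub>M D)"
    using measurable_compose[OF measurable_speg_step measurable_lyapunov] by (simp add: case_prod_beta')
  from borel_measurable_nn_integral[OF this] show ?thesis
    unfolding next_lyapunov_def by simp
qed

lemma measurable_speg_step_at [measurable]: "speg_step \<sigma> \<in> measurable D state_space"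
  using measurable_compose[OF measurable_Pair1'[of \<sigma> state_space] measurable_speg_step]
  by (simp add: space_pair_measure)

lemma next_lyapunov_le: "next_lyapunov \<sigma> \<le> ennreal (rate * lyapunov \<sigma> + noise)"
  unfolding next_lyapunov_def by (rule order_trans[OF _ lyapunov_drift]) simp

lemma next_lyapunov_drift:
  "(\<integral>\<^sup>+v. next_lyapunov (speg_step \<sigma> v) \<partial>D) + ennreal descent * sq_residual \<sigma>
    \<le> ennreal rate * next_lyapunov \<sigma> + ennreal noise"
proof -
  have "ennreal descent * sq_residual \<sigma> \<le> ennreal descent * ennreal (second_moment (xhat \<sigma>))"
    unfolding sq_residual_def using sq_F_le_second_moment by (intro mult_left_mono ennreal_leI) auto
  also have "\<dots> = (\<integral>\<^sup>+v. ennreal (descent * (norm (snd (speg_step \<sigma> v)))\<^sup>2) \<partial>D)"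
    unfolding nn_integral_sq_Fv[symmetric] speg_step_def using descent_pos
    by (simp add: ennreal_mult nn_integral_cmult)
  finally have "(\<integral>\<^sup>+v. next_lyapunov (speg_step \<sigma> v) \<partial>D) + ennreal descent * sq_residual \<sigma>
      \<le> (\<integral>\<^sup>+v. next_lyapunov (speg_step \<sigma> v) + ennreal (descent * (norm (snd (speg_step \<sigma> v)))\<^sup>2) \<partial>D)"
    by (simp add: nn_integral_add add_left_mono speg_step_def)
  also have "\<dots> \<le> (\<integral>\<^sup>+v. ennreal (rate * lyapunov (speg_step \<sigma> v) + noise) \<partial>D)"
    unfolding next_lyapunov_def by (intro nn_integral_mono lyapunov_drift)
  also have "\<dots> = ennreal rate * next_lyapunov \<sigma> + ennreal noise"
    using rate_ge_1 lyapunov_nonneg noise_nonneg unfolding next_lyapunov_def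
    by (simp add: ennreal_mult nn_integral_add nn_integral_cmult emeasure_space_1)
  finally show ?thesis .
qed

lemma nn_integral_initial_lyapunov_le:
  "(\<integral>\<^sup>+v. ennreal (lyapunov (x0, Fv Fs v x0)) \<partial>D) \<le> ennreal (initial_bound ((norm (x0 - xstar))\<^sup>2))"
proof -
  define E0 where "E0 = (norm (x0 - xstar))\<^sup>2"
  define bound where "bound v = E0 + A * (2 * (norm (Fv Fs v x0))\<^sup>2 + 2 * (norm (Fv Fs v x0 - F x0))\<^sup>2)" for v
  have pointwise: "lyapunov (x0, Fv Fs v x0) \<le> bound v" for v
  proof -
    define g where "g = Fv Fs v x0"
    have "norm (F (x0 - \<gamma> *\<^sub>R g) - g) \<le> norm (F (x0 - \<gamma> *\<^sub>R g) - F x0) + norm (g - F x0)"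
      by (metis norm_minus_commute norm_triangle_ineq4 diff_diff_eq2 diff_add_cancel)
    also have "\<dots> \<le> L * \<gamma> * norm g + norm (g - F x0)"
      using lipschitz[of "x0 - \<gamma> *\<^sub>R g" x0] gamma_pos by simp
    also have "\<dots> \<le> norm g + norm (g - F x0)"
      using mult_right_mono[of "L * \<gamma>" 1 "norm g"] L_gamma_lt by simp
    finally have "(norm (F (x0 - \<gamma> *\<^sub>R g) - g))\<^sup>2 \<le> (norm g + norm (g - F x0))\<^sup>2"
      by (simp add: power_mono)
    also have "\<dots> \<le> 2 * (norm g)\<^sup>2 + 2 * (norm (g - F x0))\<^sup>2"
      using norm_add_sq_le_weighted[of 1 "norm g" "norm (g - F x0)"] by simp
    finally show ?thesis
      unfolding lyapunov_def bound_def xhat_def E0_def g_def using A_nonneg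
      by (simp add: mult_left_mono)
  qed
  have "(norm (F x0))\<^sup>2 \<le> L\<^sup>2 * E0"
    using power_mono[OF norm_F_le[of x0]] unfolding E0_def by (simp add: power_mult_distrib)
  then have "2 * second_moment x0 + 2 * (second_moment x0 - (norm (F x0))\<^sup>2) \<le> (2 * L\<^sup>2 + 4 * \<delta>) * E0 + 8 * \<sigma>sq"
    using second_moment_le[of x0] unfolding E0_def by (simp add: algebra_simps)
  moreover have "(\<integral>v. bound v \<partial>D) = E0 + A * (2 * second_moment x0 + 2 * (second_moment x0 - (norm (F x0))\<^sup>2))"
    using integral_sq_Fv_deviation[of x0] integrable_sq_Fv[of x0] integrable_sq_Fv_deviation[of x0]
    unfolding bound_def by (simp add: prob_space second_moment_def)
  ultimately have "(\<integral>v. bound v \<partial>D) \<le> E0 + A * ((2 * L\<^sup>2 + 4 * \<delta>) * E0 + 8 * \<sigma>sq)"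
    using A_nonneg by (simp add: mult_left_mono)
  also have "\<dots> = initial_bound E0"
    unfolding initial_bound_def by (simp add: algebra_simps)
  finally have "(\<integral>v. bound v \<partial>D) \<le> initial_bound E0" .
  moreover have "(\<integral>\<^sup>+v. ennreal (lyapunov (x0, Fv Fs v x0)) \<partial>D) \<le> ennreal (\<integral>v. bound v \<partial>D)"
    using pointwise A_nonneg integrable_sq_Fv[of x0] integrable_sq_Fv_deviation[of x0]
    unfolding bound_def E0_def by (intro nn_integral_le_integral_bound) auto
  ultimately show ?thesis
    unfolding E0_def by (meson ennreal_leI order_trans)
qed

lemma nn_integral_first_residual_le:
  "(\<integral>\<^sup>+v. sq_residual (x0, Fv Fs v x0) \<partial>D) \<le> ennreal (first_residual_bound ((norm (x0 - xstar))\<^sup>2))"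
proof -
  define E0 where "E0 = (norm (x0 - xstar))\<^sup>2"
  define bound where "bound v = L\<^sup>2 * (2 * E0 + 2 * \<gamma>\<^sup>2 * (norm (Fv Fs v x0))\<^sup>2)" for v
  have pointwise: "(norm (F (x0 - \<gamma> *\<^sub>R Fv Fs v x0)))\<^sup>2 \<le> bound v" for v
  proof -
    have "(norm (F (x0 - \<gamma> *\<^sub>R Fv Fs v x0)))\<^sup>2 \<le> L\<^sup>2 * (norm ((x0 - xstar) + (- \<gamma>) *\<^sub>R Fv Fs v x0))\<^sup>2"
      using power_mono[OF norm_F_le[of "x0 - \<gamma> *\<^sub>R Fv Fs v x0"]]
      by (simp add: algebra_simps)
    also have "\<dots> \<le> bound v"
      using norm_add_sq_le_weighted[of 1 "x0 - xstar" "(- \<gamma>) *\<^sub>R Fv Fs v x0"]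
      unfolding bound_def E0_def by (intro mult_left_mono) (simp_all add: power_mult_distrib)
    finally show ?thesis .
  qed
  have "(norm (F x0))\<^sup>2 \<le> L\<^sup>2 * E0"
    using power_mono[OF norm_F_le[of x0]] unfolding E0_def by (simp add: power_mult_distrib)
  then have "second_moment x0 \<le> (\<delta> + L\<^sup>2) * E0 + 2 * \<sigma>sq"
    using second_moment_le[of x0] unfolding E0_def by (simp add: algebra_simps)
  then have "L\<^sup>2 * (2 * E0 + 2 * \<gamma>\<^sup>2 * second_moment x0) \<le> first_residual_bound E0"
    unfolding first_residual_bound_def by (intro mult_left_mono add_left_mono) auto
  moreover have "(\<integral>v. bound v \<partial>D) = L\<^sup>2 * (2 * E0 + 2 * \<gamma>\<^sup>2 * second_moment x0)"
    using integrable_sq_Fv[of x0] unfolding bound_def by (simp add: prob_space second_moment_def)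
  ultimately have "(\<integral>v. bound v \<partial>D) \<le> first_residual_bound E0"
    by simp
  moreover have "(\<integral>\<^sup>+v. sq_residual (x0, Fv Fs v x0) \<partial>D) \<le> ennreal (\<integral>v. bound v \<partial>D)"
    using pointwise integrable_sq_Fv[of x0] unfolding sq_residual_def xhat_def bound_def E0_def
    by (intro nn_integral_le_integral_bound) auto
  ultimately show ?thesis
    unfolding E0_def by (meson ennreal_leI order_trans)
qed

definition speg_state :: "'a \<Rightarrow> (real^'n) stream \<Rightarrow> nat \<Rightarrow> 'a \<times> 'a" where
  "speg_state x0 s k = trajectory speg_step (x0, Fv Fs (shd s) x0) k (stl s)"

lemma speg_eq_speg_state: "speg Fs \<gamma> \<omega> x0 (snth s) k = (fst (speg_state x0 s k), xhat (speg_state x0 s k))"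
  by (induction k) (simp_all add: speg_state_def speg_step_def xhat_def Let_def)

lemma measurable_speg_state: "(\<lambda>s. speg_state x0 s k) \<in> measurable (stream_space D) state_space"
  unfolding speg_state_def
  by (intro measurable_trajectory[OF measurable_speg_step]) (auto simp: space_pair_measure)

lemma nn_integral_initial_next_lyapunov_le:
  "(\<integral>\<^sup>+v. next_lyapunov (x0, Fv Fs v x0) \<partial>D) \<le> ennreal (rate * initial_bound ((norm (x0 - xstar))\<^sup>2) + noise)"
proof -
  have "(\<integral>\<^sup>+v. next_lyapunov (x0, Fv Fs v x0) \<partial>D)
      \<le> (\<integral>\<^sup>+v. ennreal rate * ennreal (lyapunov (x0, Fv Fs v x0)) + ennreal noise \<partial>D)"
    using next_lyapunov_le rate_ge_1 lyapunov_nonneg noise_nonneg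
    by (intro nn_integral_mono) (simp add: ennreal_mult)
  also have "\<dots> = ennreal rate * (\<integral>\<^sup>+v. ennreal (lyapunov (x0, Fv Fs v x0)) \<partial>D) + ennreal noise"
    by (simp add: nn_integral_add nn_integral_cmult emeasure_space_1)
  also have "\<dots> \<le> ennreal rate * ennreal (initial_bound ((norm (x0 - xstar))\<^sup>2)) + ennreal noise"
    using nn_integral_initial_lyapunov_le by (intro add_right_mono mult_left_mono) auto
  finally show ?thesis
    using rate_ge_1 noise_nonneg initial_bound_nonneg[OF zero_le_power2] by (simp add: ennreal_mult)
qed

lemma weighted_residual_sum_le:
  "(\<Sum>k<n. ennreal ((1 / rate) ^ Suc k * descent) * (\<integral>\<^sup>+s. sq_residual (speg_state x0 s k) \<partial>stream_space D))
    \<le> ennreal (rate * initial_bound ((norm (x0 - xstar))\<^sup>2) + noise + noise * (\<Sum>k<n. (1 / rate) ^ Suc k))"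
proof -
  interpret S: prob_space "stream_space D" by (rule prob_space_stream_space)
  define B where "B = noise * (\<Sum>k<n. (1 / rate) ^ Suc k)"
  define J where "J = discounted_sum speg_step sq_residual next_lyapunov (1 / rate) descent n"
  have residual_meas: "(\<lambda>s. sq_residual (speg_state x0 s k)) \<in> borel_measurable (stream_space D)" for k
    using measurable_compose[OF measurable_speg_state measurable_sq_residual] .
  have J_meas: "(\<lambda>s. J (x0, Fv Fs (shd s) x0) (stl s)) \<in> borel_measurable (stream_space D)"
    using measurable_compose[OF measurable_speg_state measurable_next_lyapunov] residual_meas
    unfolding J_def discounted_sum_def speg_state_def[symmetric] by measurable
  have "(\<Sum>k<n. ennreal ((1 / rate) ^ Suc k * descent) * (\<integral>\<^sup>+s. sq_residual (speg_state x0 s k) \<partial>stream_space D))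
      = (\<integral>\<^sup>+s. (\<Sum>k<n. ennreal ((1 / rate) ^ Suc k * descent) * sq_residual (speg_state x0 s k)) \<partial>stream_space D)"
    using residual_meas by (simp add: nn_integral_sum nn_integral_cmult)
  also have "\<dots> \<le> (\<integral>\<^sup>+s. J (x0, Fv Fs (shd s) x0) (stl s) \<partial>stream_space D)"
    unfolding J_def discounted_sum_def speg_state_def by (intro nn_integral_mono) auto
  also have "\<dots> = (\<integral>\<^sup>+v. (\<integral>\<^sup>+s. J (x0, Fv Fs v x0) s \<partial>stream_space D) \<partial>D)"
    using nn_integral_stream_space[OF J_meas] by simp
  also have "\<dots> \<le> (\<integral>\<^sup>+v. next_lyapunov (x0, Fv Fs v x0) + ennreal B \<partial>D)"
    unfolding J_def B_def
    using nn_integral_discounted_drift_le[OF measurable_speg_step measurable_next_lyapunov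
        measurable_sq_residual next_lyapunov_drift] rate_ge_1 descent_pos noise_nonneg
    by (intro nn_integral_mono) (auto simp: space_pair_measure)
  also have "\<dots> = (\<integral>\<^sup>+v. next_lyapunov (x0, Fv Fs v x0) \<partial>D) + ennreal B"
    using measurable_compose[OF measurable_Pair2'[of x0 borel] measurable_next_lyapunov]
    by (simp add: nn_integral_add emeasure_space_1)
  also have "\<dots> \<le> ennreal (rate * initial_bound ((norm (x0 - xstar))\<^sup>2) + noise) + ennreal B"
    using nn_integral_initial_next_lyapunov_le by (rule add_right_mono)
  finally show ?thesis
    unfolding B_def using rate_ge_1 noise_nonneg initial_bound_nonneg[OF zero_le_power2]
    by (simp add: sum_nonneg)
qed
lemma first_residual_le:
  "(\<integral>\<^sup>+s. sq_residual (speg_state x0 s 0) \<partial>stream_space D) \<le> ennreal (first_residual_bound ((norm (x0 - xstar))\<^sup>2))"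
proof -
  interpret S: prob_space "stream_space D" by (rule prob_space_stream_space)
  have "(\<lambda>s. sq_residual (speg_state x0 s 0)) \<in> borel_measurable (stream_space D)"
    using measurable_compose[OF measurable_speg_state measurable_sq_residual] .
  then have "(\<integral>\<^sup>+s. sq_residual (speg_state x0 s 0) \<partial>stream_space D) = (\<integral>\<^sup>+v. sq_residual (x0, Fv Fs v x0) \<partial>D)"
    by (simp add: nn_integral_stream_space speg_state_def S.emeasure_space_1)
  then show ?thesis
    using nn_integral_first_residual_le by simp
qed

lemma Min_mean_sq_residual_le_averaged:
  assumes "n \<ge> 1" "rate ^ n / real n \<le> 1"
  shows "Min ((\<lambda>k. \<integral>\<^sup>+s. sq_residual (speg_state x0 s k) \<partial>stream_space D) ` {..<n})
    \<le> ennreal (speg_bound n ((norm (x0 - xstar))\<^sup>2))"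
proof -
  define B where "B = (\<Sum>k<n. (1 / rate) ^ Suc k)"
  have weights: "(\<Sum>k<n. (1 / rate) ^ Suc k * descent) = descent * B"
    unfolding B_def sum_distrib_left by (simp only: mult.commute)
  have "{..<n} \<noteq> {}"
    using \<open>n \<ge> 1\<close> by (simp add: lessThan_empty_iff)
  then have "0 < descent * B"
    unfolding B_def using descent_pos rate_ge_1 by (intro mult_pos_pos sum_pos) auto
  then have "Min ((\<lambda>k. \<integral>\<^sup>+s. sq_residual (speg_state x0 s k) \<partial>stream_space D) ` {..<n})
      \<le> ennreal ((rate * initial_bound ((norm (x0 - xstar))\<^sup>2) + noise + noise * B) / (descent * B))"
    using Min_le_weighted_average[OF _ \<open>{..<n} \<noteq> {}\<close> _ _ weighted_residual_sum_le[of x0 n]]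
      rate_ge_1 descent_pos
    unfolding weights B_def by simp
  also have "\<dots> \<le> ennreal (speg_bound n ((norm (x0 - xstar))\<^sup>2))"
    unfolding B_def using averaged_bound_le_speg_bound[OF assms zero_le_power2] by (rule ennreal_leI)
  finally show ?thesis .
qed

lemma min_mean_sq_residual_le:
  assumes "K \<ge> 2"
  shows "(MIN k\<in>{0..K-1}. \<integral>\<^sup>+ s. ennreal ((norm (F (speg_xhat Fs \<gamma> \<omega> x0 (snth s) k)))\<^sup>2) \<partial>stream_space D)
    \<le> ennreal (speg_bound (K - 1) ((norm (x0 - xstar))\<^sup>2))"
proof -
  define n where "n = K - 1"
  define E0 where "E0 = (norm (x0 - xstar))\<^sup>2"
  define m where "m k = (\<integral>\<^sup>+s. sq_residual (speg_state x0 s k) \<partial>stream_space D)" for k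
  have "n \<ge> 1" "E0 \<ge> 0" unfolding n_def E0_def using assms by auto
  have "Min (m ` {0..n}) \<le> ennreal (speg_bound n E0)"
  proof (cases "rate ^ n / real n \<le> 1")
    case True
    have "Min (m ` {0..n}) \<le> Min (m ` {..<n})"
      using \<open>n \<ge> 1\<close> by (intro Min_antimono image_mono) (auto simp: lessThan_empty_iff)
    also have "\<dots> \<le> ennreal (speg_bound n E0)"
      using Min_mean_sq_residual_le_averaged[OF \<open>n \<ge> 1\<close> True] unfolding m_def E0_def .
    finally show ?thesis .
  next
    case False
    have "Min (m ` {0..n}) \<le> m 0" by (intro Min_le) auto
    also have "\<dots> \<le> ennreal (first_residual_bound E0)"
      unfolding m_def E0_def by (rule first_residual_le)
    also have "\<dots> \<le> ennreal (speg_bound n E0)"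
      using first_residual_bound_le_speg_bound[OF \<open>n \<ge> 1\<close> _ \<open>E0 \<ge> 0\<close>] False by (simp add: ennreal_leI)
    finally show ?thesis .
  qed
  moreover have "speg_xhat Fs \<gamma> \<omega> x0 (snth s) k = xhat (speg_state x0 s k)" for s k
    unfolding speg_xhat_def speg_eq_speg_state by simp
  ultimately show ?thesis
    unfolding m_def n_def E0_def sq_residual_def by simp
qed

end

theorem theoremE4:
  fixes Fs :: "'n::finite \<Rightarrow> 'a::euclidean_space \<Rightarrow> 'a"
    and D :: "(real^'n) measure"
    and xstar x0 :: 'a
    and L \<rho> \<delta> \<sigma>sq \<gamma> \<omega> :: real
    and K :: nat
  assumes Fs_meas: "\<And>i. Fs i \<in> borel_measurable borel"
    and sol: "Favg Fs xstar = 0"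
    and L_pos: "L > 0"
    and lip: "\<And>x y. norm (Favg Fs x - Favg Fs y) \<le> L * norm (x - y)"
    and rho: "0 < \<rho>" "\<rho> < 1 / (2 * L)"
    and minty: "\<And>x. inner (Favg Fs x) (x - xstar) \<ge> - \<rho> * (norm (Favg Fs x))\<^sup>2"
    and D_prob: "prob_space D"
    and D_sets: "sets D = sets borel"
    and D_nonneg: "AE v in D. \<forall>i. v $ i \<ge> 0"
    and D_mean: "\<And>i. (\<integral>\<^sup>+ v. ennreal (v $ i) \<partial>D) = 1"
    and delta: "\<delta> \<ge> 0" and sigma: "\<sigma>sq \<ge> 0"
    and var: "\<And>x. (\<integral>\<^sup>+ v. ennreal ((norm (Fv Fs v x))\<^sup>2) \<partial>D)
                 \<le> ennreal (\<delta> * (norm (x - xstar))\<^sup>2 + (norm (Favg Fs x))\<^sup>2 + 2 * \<sigma>sq)"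
    and gamma: "max (2 * \<rho>) (1 / (2 * L)) < \<gamma>" "\<gamma> < 1 / L"
    and omega: "0 < \<omega>" "\<omega> < min (\<gamma> - 2 * \<rho>) (1 / (4 * L) - \<gamma> / 4)"
    and delta_le: "\<delta> \<le> (1 - L * \<gamma>) * L ^ 3 * \<omega> / 32"
    and K: "K \<ge> 2"
  shows "(MIN k\<in>{0..K-1}. \<integral>\<^sup>+ s. ennreal ((norm (Favg Fs (speg_xhat Fs \<gamma> \<omega> x0 (snth s) k)))\<^sup>2)
              \<partial>(stream_space D))
         \<le> ennreal (
             (1 + 8 * \<omega> * \<gamma> * (\<delta> + L\<^sup>2) - L * \<gamma>)
               * (1 + 48 * \<omega> * \<gamma> * \<delta> / (1 - L * \<gamma>)\<^sup>2) ^ (K - 1) * (norm (x0 - xstar))\<^sup>2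
             / (\<omega> * \<gamma> * (1 - L * (\<gamma> + 4 * \<omega>)) * real (K - 1))
           + 8 * (8 + (1 - L * \<gamma>)\<^sup>2 / real (K - 1)
                     * (1 + 48 * \<omega> * \<gamma> * \<delta> / (1 - L * \<gamma>)\<^sup>2) ^ (K - 1)) * \<sigma>sq
             / ((1 - L * \<gamma>)\<^sup>2 * (1 - L * (\<gamma> + 4 * \<omega>))))"
proof -
  interpret speg_setting D L \<rho> \<delta> \<sigma>sq \<gamma> \<omega> Fs xstar
    using assms by (simp add: speg_setting_def speg_setting_axioms_def unbiased_sampling_def
        unbiased_sampling_axioms_def speg_step_sizes_def)
  show ?thesis
    using min_mean_sq_residual_le[OF K] unfolding speg_bound_def .
qed

end
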